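(* Let $d\ge1$ and $p$ an odd integer. Let $(g_n)$ be independent real random variables satisfying $P(|g_n|<\rho)>0$ for all $\rho>0$ and all $n$. Let $u_0=\sum_nc_nh_n\in\overline H^{(d-1)/2}(\mathbb R^d)$, $u_0^\omega=\sum_nc_ng_n(\omega)h_n$ and, for $N\in\mathbb N^*$, $[u_0^\omega]_N=\sum_{\lambda_n<N}c_ng_n(\omega)h_n$. Then for every $t>0$ and every $N\in\mathbb N^*$, $$P\Big(\omega:\ \|[u_0^\omega]_N\|_{\overline H^{(d-1)/2}(\mathbb R^d)}\le t\ \text{ and }\ \|e^{-i\tau H}[u_0^\omega]_N\|_{L^{2p}_\tau([-2\pi,2\pi],\overline W^{\frac17,\infty}(\mathbb R^d))}\le t\Big)>0.$$
   Context: $H=-\Delta+|x|^2$ on $\mathbb R^d$; $(h_n)$ is an orthonormal basis of $L^2(\mathbb R^d)$ of eigenfunctions, $Hh_n=\lambda_n^2h_n$. $\overline H^s$ (resp. $\overline W^{s,q}$) is the closure of the Schwartz space for $\|H^{s/2}u\|_{L^2}$ (resp. $\|H^{s/2}u\|_{L^q}$). The $g_n$ are defined on a probability space $(\Omega,\mathcal A,P)$. *)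

theory Defs
  imports "HOL-Probability.Probability"
begin

(* Functions on R^d are modelled as  real^'n => complex  with d = CARD('n). *)

definition partial2 :: "(real^'n \<Rightarrow> complex) \<Rightarrow> real^'n \<Rightarrow> 'n \<Rightarrow> complex" where
  "partial2 f x i = vector_derivative
      (\<lambda>s. vector_derivative (\<lambda>t. f (x + t *\<^sub>R axis i 1)) (at s)) (at 0)"

definition twice_partially_differentiable :: "(real^'n \<Rightarrow> complex) \<Rightarrow> bool" where
  "twice_partially_differentiable f \<longleftrightarrow>
     (\<forall>x i. (\<forall>s. (\<lambda>t. f (x + t *\<^sub>R axis i 1)) differentiable (at s)) \<and>
            (\<lambda>s. vector_derivative (\<lambda>t. f (x + t *\<^sub>R axis i 1)) (at s)) differentiable (at 0))"

definition laplacian :: "(real^'n \<Rightarrow> complex) \<Rightarrow> real^'n \<Rightarrow> complex" where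
  "laplacian f x = (\<Sum>i\<in>UNIV. partial2 f x i)"

definition harmonic_osc :: "(real^'n \<Rightarrow> complex) \<Rightarrow> real^'n \<Rightarrow> complex" where
  "harmonic_osc f x = - laplacian f x + complex_of_real ((norm x)\<^sup>2) * f x"

definition L2_inner :: "(real^'n \<Rightarrow> complex) \<Rightarrow> (real^'n \<Rightarrow> complex) \<Rightarrow> complex" where
  "L2_inner f g = (LINT x|lborel. f x * cnj (g x))"

definition L2_fun :: "(real^'n \<Rightarrow> complex) \<Rightarrow> bool" where
  "L2_fun f \<longleftrightarrow> f \<in> borel_measurable lborel \<and> integrable lborel (\<lambda>x. (cmod (f x))\<^sup>2)"

definition L2_norm :: "(real^'n \<Rightarrow> complex) \<Rightarrow> real" where
  "L2_norm f = sqrt (LINT x|lborel. (cmod (f x))\<^sup>2)"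

definition Linf_norm :: "(real^'n \<Rightarrow> complex) \<Rightarrow> real" where
  "Linf_norm f = real_of_ereal (esssup lborel (\<lambda>x. ereal (cmod (f x))))"

definition hermite_basis :: "(nat \<Rightarrow> real^'n \<Rightarrow> complex) \<Rightarrow> (nat \<Rightarrow> real) \<Rightarrow> bool" where
  "hermite_basis h lam \<longleftrightarrow>
     (\<forall>n. L2_fun (h n)) \<and>
     (\<forall>n m. L2_inner (h n) (h m) = (if n = m then 1 else 0)) \<and>
     (\<forall>f. L2_fun f \<longrightarrow> (\<forall>n. L2_inner f (h n) = 0) \<longrightarrow> (AE x in lborel. f x = 0)) \<and>
     (\<forall>n. twice_partially_differentiable (h n)) \<and>
     (\<forall>n x. harmonic_osc (h n) x = complex_of_real ((lam n)\<^sup>2) * h n x) \<and>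
     (\<forall>n. lam n > 0)"

definition fin_comb :: "(nat \<Rightarrow> real^'n \<Rightarrow> complex) \<Rightarrow> nat set \<Rightarrow> (nat \<Rightarrow> complex) \<Rightarrow> real^'n \<Rightarrow> complex" where
  "fin_comb h F a x = (\<Sum>n\<in>F. a n * h n x)"

(* H^{s/2} (sum_{n in F} a_n h_n) = sum_{n in F} (lam_n^2)^{s/2} a_n h_n  (functional calculus) *)
definition Hpow_comb :: "(nat \<Rightarrow> real^'n \<Rightarrow> complex) \<Rightarrow> (nat \<Rightarrow> real) \<Rightarrow> real \<Rightarrow> nat set \<Rightarrow> (nat \<Rightarrow> complex) \<Rightarrow> real^'n \<Rightarrow> complex" where
  "Hpow_comb h lam s F a = fin_comb h F (\<lambda>n. complex_of_real (((lam n)\<^sup>2) powr (s / 2)) * a n)"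

(* coefficients of e^{-i tau H} (sum a_n h_n) *)
definition schr_coeff :: "(nat \<Rightarrow> real) \<Rightarrow> real \<Rightarrow> (nat \<Rightarrow> complex) \<Rightarrow> nat \<Rightarrow> complex" where
  "schr_coeff lam \<tau> a n = exp (- \<i> * complex_of_real (\<tau> * (lam n)\<^sup>2)) * a n"

definition Hbar_norm :: "(nat \<Rightarrow> real^'n \<Rightarrow> complex) \<Rightarrow> (nat \<Rightarrow> real) \<Rightarrow> real \<Rightarrow> nat set \<Rightarrow> (nat \<Rightarrow> complex) \<Rightarrow> real" where
  "Hbar_norm h lam s F a = L2_norm (Hpow_comb h lam s F a)"

definition Wbar_inf_norm :: "(nat \<Rightarrow> real^'n \<Rightarrow> complex) \<Rightarrow> (nat \<Rightarrow> real) \<Rightarrow> real \<Rightarrow> nat set \<Rightarrow> (nat \<Rightarrow> complex) \<Rightarrow> real" where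
  "Wbar_inf_norm h lam s F a = Linf_norm (Hpow_comb h lam s F a)"

(* u = sum c_n h_n lies in \bar H^s: ||H^{s/2} u||_{L^2}^2 = sum (lam_n^2)^s |c_n|^2 < infinity *)
definition in_Hbar :: "(nat \<Rightarrow> real) \<Rightarrow> real \<Rightarrow> (nat \<Rightarrow> complex) \<Rightarrow> bool" where
  "in_Hbar lam s c \<longleftrightarrow> summable (\<lambda>n. ((lam n)\<^sup>2) powr s * (cmod (c n))\<^sup>2)"

end

theory Submission
  imports Defs
begin

text \<open>For fixed N the truncated datum is a finite combination of the h_n, n \<in> F = {n. lam n < N}.
On such combinations Parseval turns the H-bar norm into a weighted l^2 norm of the coefficients, and
the W-bar L^\<infinity> norm is bounded by C * (\<Sum>n\<in>F. |\<beta>_n|): Gaussian elimination over F shows that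
the coefficient vectors giving essentially bounded combinations form a closed set on which the
essential supremum is Lipschitz (and outside of which it is 0 by convention). Since e^{-i\<tau>H}
only rotates the coefficients, both norms of the randomised datum are at most t as soon as
|g_n| < \<rho> for all n \<in> F with \<rho> small, and by independence this event has positive probability.\<close>

definition ess_bounded :: "'a measure \<Rightarrow> ('a \<Rightarrow> complex) \<Rightarrow> bool" where
  "ess_bounded M f \<longleftrightarrow> (\<exists>B. AE x in M. cmod (f x) \<le> B)"

definition ess_sup_norm :: "'a measure \<Rightarrow> ('a \<Rightarrow> complex) \<Rightarrow> real" where
  "ess_sup_norm M f = real_of_ereal (esssup M (\<lambda>x. ereal (cmod (f x))))"

lemma Linf_norm_eq_ess_sup_norm: "Linf_norm f = ess_sup_norm lborel f"
  by (simp add: Linf_norm_def ess_sup_norm_def)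

lemma ess_bounded_add: "ess_bounded M f \<Longrightarrow> ess_bounded M g \<Longrightarrow> ess_bounded M (\<lambda>x. f x + g x)"
  unfolding ess_bounded_def
proof (elim exE)
  fix A B assume "AE x in M. cmod (f x) \<le> A" "AE x in M. cmod (g x) \<le> B"
  then have "AE x in M. cmod (f x + g x) \<le> A + B"
    by eventually_elim (meson add_mono norm_triangle_ineq order_trans)
  then show "\<exists>B. AE x in M. cmod (f x + g x) \<le> B" by blast
qed

lemma ess_bounded_cmult: "ess_bounded M f \<Longrightarrow> ess_bounded M (\<lambda>x. a * f x)"
  unfolding ess_bounded_def
proof (elim exE)
  fix B assume "AE x in M. cmod (f x) \<le> B"
  then have "AE x in M. cmod (a * f x) \<le> cmod a * B"
    by eventually_elim (simp add: norm_mult mult_left_mono)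
  then show "\<exists>B. AE x in M. cmod (a * f x) \<le> B" by blast
qed

lemma ess_bounded_if_esssup_real:
  "esssup M (\<lambda>x. ereal (cmod (f x))) = ereal r \<Longrightarrow> ess_bounded M f"
  using esssup_AE[of "\<lambda>x. ereal (cmod (f x))" M]
  unfolding ess_bounded_def by (auto elim!: eventually_mono)

lemma ess_sup_norm_nonneg: "0 \<le> ess_sup_norm M f"
proof (cases "esssup M (\<lambda>x. ereal (cmod (f x)))")
  case (real r)
  show ?thesis
  proof (rule ccontr)
    assume "\<not> 0 \<le> ess_sup_norm M f"
    then have "r < 0" using real by (simp add: ess_sup_norm_def)
    have "AE x in M. ereal (cmod (f x)) \<le> ereal r"
      using esssup_AE[of "\<lambda>x. ereal (cmod (f x))" M] real by simp
    then have "AE x in M. False" using \<open>r < 0\<close>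
      by (auto elim!: eventually_mono) (meson norm_ge_zero order.trans not_le)
    then have "emeasure M (space M) = 0" by (simp add: eventually_False ae_filter_eq_bot_iff)
    moreover have "(\<lambda>x. ereal (cmod (f x))) \<in> borel_measurable M"
      using real esssup_non_measurable[of "\<lambda>x. ereal (cmod (f x))" M] by (auto simp: top_ereal_def)
    ultimately show False using real esssup_zero_space by fastforce
  qed
qed (simp_all add: ess_sup_norm_def)

lemma ess_sup_norm_eq_0_if_unbounded: "\<not> ess_bounded M f \<Longrightarrow> ess_sup_norm M f = 0"
  by (cases "esssup M (\<lambda>x. ereal (cmod (f x)))")
     (auto simp: ess_sup_norm_def dest: ess_bounded_if_esssup_real)

lemma ess_sup_norm_le:
  assumes f: "f \<in> borel_measurable M" and B: "0 \<le> B"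
    and bound: "ess_bounded M f \<Longrightarrow> AE x in M. cmod (f x) \<le> B"
  shows "ess_sup_norm M f \<le> B"
proof (cases "ess_bounded M f")
  case True
  with bound have "AE x in M. ereal (cmod (f x)) \<le> ereal B" by (auto elim!: eventually_mono)
  then have "esssup M (\<lambda>x. ereal (cmod (f x))) \<le> ereal B"
    by (intro esssup_I) (use f in measurable)
  then show ?thesis
    using B by (cases "esssup M (\<lambda>x. ereal (cmod (f x)))") (auto simp: ess_sup_norm_def)
qed (simp add: ess_sup_norm_eq_0_if_unbounded B)

lemma AE_le_ess_sup_norm:
  assumes f: "f \<in> borel_measurable M" and "ess_bounded M f"
  shows "AE x in M. cmod (f x) \<le> ess_sup_norm M f"
proof -
  obtain B where B: "AE x in M. cmod (f x) \<le> B" using assms(2) unfolding ess_bounded_def by auto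
  have "esssup M (\<lambda>x. ereal (cmod (f x))) \<le> ereal B"
    by (intro esssup_I) (use f B in \<open>measurable, auto elim!: eventually_mono\<close>)
  then show ?thesis
    using esssup_AE[of "\<lambda>x. ereal (cmod (f x))" M]
    by (cases "esssup M (\<lambda>x. ereal (cmod (f x)))") (auto simp: ess_sup_norm_def elim!: eventually_mono)
qed

lemma ess_sup_norm_add_le:
  assumes f: "f \<in> borel_measurable M" and g: "g \<in> borel_measurable M" and "ess_bounded M g"
  shows "ess_sup_norm M (\<lambda>x. f x + g x) \<le> ess_sup_norm M f + ess_sup_norm M g"
proof (rule ess_sup_norm_le)
  show "0 \<le> ess_sup_norm M f + ess_sup_norm M g" by (simp add: ess_sup_norm_nonneg)
  assume "ess_bounded M (\<lambda>x. f x + g x)"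
  from ess_bounded_add[OF this ess_bounded_cmult[OF assms(3)]]
  have "ess_bounded M (\<lambda>x. (f x + g x) + (-1) * g x)" .
  moreover have "(\<lambda>x. (f x + g x) + (-1) * g x) = f" by auto
  ultimately have "ess_bounded M f" by metis
  from AE_le_ess_sup_norm[OF f this] AE_le_ess_sup_norm[OF g assms(3)]
  show "AE x in M. cmod (f x + g x) \<le> ess_sup_norm M f + ess_sup_norm M g"
    by eventually_elim (meson add_mono norm_triangle_ineq order_trans)
qed (use f g in measurable)

definition ess_bounded_coeffs ::
    "(real^'n) measure \<Rightarrow> (nat \<Rightarrow> real^'n \<Rightarrow> complex) \<Rightarrow> nat set \<Rightarrow> (nat \<Rightarrow> complex) set" where
  "ess_bounded_coeffs M f F = {\<beta>. ess_bounded M (fin_comb f F \<beta>)}"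

lemma fin_comb_insert:
  "finite F \<Longrightarrow> k \<notin> F \<Longrightarrow> fin_comb f (insert k F) \<beta> = (\<lambda>x. \<beta> k * f k x + fin_comb f F \<beta> x)"
  by (simp add: fin_comb_def fun_eq_iff)

lemma fin_comb_insert_pivot:
  assumes "finite F" "k \<notin> F"
  shows "fin_comb f (insert k F) \<beta> x =
    \<beta> k * (f k x + fin_comb f F \<gamma> x) + fin_comb f F (\<lambda>j. \<beta> j - \<beta> k * \<gamma> j) x"
  using assms by (simp add: fin_comb_def algebra_simps sum_subtractf sum_distrib_left)

text \<open>Elimination step: if some f_k + \<Sum>\<gamma>_j f_j is essentially bounded it serves as a pivot;
otherwise every bounded combination over insert k F has vanishing k-th coefficient.\<close>

lemma ess_bounded_coeffs_insert_pivot: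
  assumes F: "finite F" "k \<notin> F" and pivot: "ess_bounded M (\<lambda>x. f k x + fin_comb f F \<gamma> x)"
  shows "ess_bounded_coeffs M f (insert k F) =
    (\<lambda>\<beta> j. \<beta> j - \<beta> k * \<gamma> j) -` ess_bounded_coeffs M f F"
proof (intro set_eqI iffI)
  fix \<beta>
  let ?u = "\<lambda>x. f k x + fin_comb f F \<gamma> x" and ?L = "\<lambda>j. \<beta> j - \<beta> k * \<gamma> j"
  have eq: "fin_comb f (insert k F) \<beta> = (\<lambda>x. fin_comb f F ?L x + \<beta> k * ?u x)"
    unfolding fun_eq_iff using fin_comb_insert_pivot[OF F, of f \<beta> _ \<gamma>] by (metis add.commute)
  show "\<beta> \<in> ess_bounded_coeffs M f (insert k F)"
    if "\<beta> \<in> (\<lambda>\<beta> j. \<beta> j - \<beta> k * \<gamma> j) -` ess_bounded_coeffs M f F"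
    using that ess_bounded_add[OF _ ess_bounded_cmult[OF pivot]]
    by (simp add: ess_bounded_coeffs_def eq)
  assume "\<beta> \<in> ess_bounded_coeffs M f (insert k F)"
  then have "ess_bounded M (\<lambda>x. fin_comb f F ?L x + \<beta> k * ?u x)"
    by (simp add: ess_bounded_coeffs_def eq)
  from ess_bounded_add[OF this ess_bounded_cmult[OF pivot, of "- \<beta> k"]]
  have "ess_bounded M (\<lambda>x. (fin_comb f F ?L x + \<beta> k * ?u x) + (- \<beta> k) * ?u x)" .
  moreover have "(\<lambda>x. (fin_comb f F ?L x + \<beta> k * ?u x) + (- \<beta> k) * ?u x) = fin_comb f F ?L"
    by (simp add: fun_eq_iff)
  ultimately show "\<beta> \<in> (\<lambda>\<beta> j. \<beta> j - \<beta> k * \<gamma> j) -` ess_bounded_coeffs M f F"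
    by (simp add: ess_bounded_coeffs_def)
qed

lemma ess_bounded_coeffs_insert_no_pivot:
  assumes F: "finite F" "k \<notin> F" and no_pivot: "\<And>\<gamma>. \<not> ess_bounded M (\<lambda>x. f k x + fin_comb f F \<gamma> x)"
  shows "ess_bounded_coeffs M f (insert k F) = {\<beta>. \<beta> k = 0} \<inter> ess_bounded_coeffs M f F"
proof (intro set_eqI iffI)
  fix \<beta> assume \<beta>: "\<beta> \<in> ess_bounded_coeffs M f (insert k F)"
  have "\<beta> k = 0"
  proof (rule ccontr)
    assume nz: "\<beta> k \<noteq> 0"
    have "(\<lambda>x. inverse (\<beta> k) * fin_comb f (insert k F) \<beta> x) =
        (\<lambda>x. f k x + fin_comb f F (\<lambda>j. inverse (\<beta> k) * \<beta> j) x)"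
      using F nz by (simp add: fin_comb_def fun_eq_iff distrib_left sum_distrib_left mult.assoc)
    then show False
      using ess_bounded_cmult[of M "fin_comb f (insert k F) \<beta>" "inverse (\<beta> k)"] \<beta> no_pivot
      by (simp add: ess_bounded_coeffs_def)
  qed
  then show "\<beta> \<in> {\<beta>. \<beta> k = 0} \<inter> ess_bounded_coeffs M f F"
    using \<beta> F by (simp add: ess_bounded_coeffs_def fin_comb_insert)
qed (use F in \<open>simp add: ess_bounded_coeffs_def fin_comb_insert\<close>)

lemma closed_ess_bounded_coeffs: "finite F \<Longrightarrow> closed (ess_bounded_coeffs M f F)"
proof (induction F rule: finite_induct)
  case empty
  then show ?case by (simp add: ess_bounded_coeffs_def fin_comb_def ess_bounded_def)
next
  case (insert k F)
  have coord: "continuous_on UNIV (\<lambda>\<beta>::nat \<Rightarrow> complex. \<beta> j)" for j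
    by (rule continuous_on_product_coordinates)
  show ?case
  proof (cases "\<exists>\<gamma>. ess_bounded M (\<lambda>x. f k x + fin_comb f F \<gamma> x)")
    case True
    then obtain \<gamma> where "ess_bounded M (\<lambda>x. f k x + fin_comb f F \<gamma> x)" by blast
    moreover have "continuous_on UNIV (\<lambda>(\<beta>::nat \<Rightarrow> complex) j. \<beta> j - \<beta> k * \<gamma> j)"
      by (intro continuous_on_coordinatewise_then_product continuous_intros coord)
    ultimately show ?thesis
      using insert by (simp add: ess_bounded_coeffs_insert_pivot closed_vimage)
  next
    case False
    then show ?thesis
      using insert by (simp add: ess_bounded_coeffs_insert_no_pivot closed_Int closed_Collect_eq coord)
  qed
qed

lemma sum_norm_sub_scaled_le:
  "(\<Sum>n\<in>F. cmod (\<beta> n - \<beta> k * \<gamma> n)) \<le> (\<Sum>n\<in>F. cmod (\<beta> n)) + cmod (\<beta> k) * (\<Sum>n\<in>F. cmod (\<gamma> n))"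
proof -
  have "(\<Sum>n\<in>F. cmod (\<beta> n - \<beta> k * \<gamma> n)) \<le> (\<Sum>n\<in>F. cmod (\<beta> n) + cmod (\<beta> k) * cmod (\<gamma> n))"
    by (intro sum_mono) (metis norm_mult norm_triangle_ineq4)
  then show ?thesis by (simp add: sum.distrib sum_distrib_left)
qed

lemma fin_comb_bound_insert_pivot:
  assumes F: "finite F" "k \<notin> F"
    and pivot: "AE x in M. cmod (f k x + fin_comb f F \<gamma> x) \<le> D"
    and C: "0 \<le> C" "AE x in M. cmod (fin_comb f F (\<lambda>j. \<beta> j - \<beta> k * \<gamma> j) x) \<le>
                  C * (\<Sum>n\<in>F. cmod (\<beta> n - \<beta> k * \<gamma> n))"
  shows "AE x in M. cmod (fin_comb f (insert k F) \<beta> x) \<le>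
    (max D 0 + C + C * (\<Sum>n\<in>F. cmod (\<gamma> n))) * (\<Sum>n\<in>insert k F. cmod (\<beta> n))"
  using pivot C(2)
proof eventually_elim
  case (elim x)
  define S where "S = (\<Sum>n\<in>F. cmod (\<beta> n))"
  define \<Gamma> where "\<Gamma> = (\<Sum>n\<in>F. cmod (\<gamma> n))"
  have "S \<ge> 0" "\<Gamma> \<ge> 0" by (simp_all add: S_def \<Gamma>_def sum_nonneg)
  have "cmod (fin_comb f (insert k F) \<beta> x) \<le>
      cmod (\<beta> k) * cmod (f k x + fin_comb f F \<gamma> x) + cmod (fin_comb f F (\<lambda>j. \<beta> j - \<beta> k * \<gamma> j) x)"
    unfolding fin_comb_insert_pivot[OF F, of f \<beta> x \<gamma>] by (metis norm_mult norm_triangle_ineq)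
  also have "\<dots> \<le> cmod (\<beta> k) * max D 0 + C * (S + cmod (\<beta> k) * \<Gamma>)"
  proof (rule add_mono)
    show "cmod (\<beta> k) * cmod (f k x + fin_comb f F \<gamma> x) \<le> cmod (\<beta> k) * max D 0"
      using elim(1) by (intro mult_left_mono) auto
    show "cmod (fin_comb f F (\<lambda>j. \<beta> j - \<beta> k * \<gamma> j) x) \<le> C * (S + cmod (\<beta> k) * \<Gamma>)"
      using elim(2) mult_left_mono[OF sum_norm_sub_scaled_le[of \<beta> k \<gamma> F] C(1)]
      unfolding S_def \<Gamma>_def by linarith
  qed
  also have "\<dots> \<le> (max D 0 + C + C * \<Gamma>) * (cmod (\<beta> k) + S)"
    using C(1) \<open>S \<ge> 0\<close> \<open>\<Gamma> \<ge> 0\<close> by (simp add: algebra_simps)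
  finally show ?case using F by (simp add: S_def \<Gamma>_def)
qed

lemma fin_comb_bound:
  assumes "finite F"
  shows "\<exists>C\<ge>0. \<forall>\<beta>\<in>ess_bounded_coeffs M f F.
    AE x in M. cmod (fin_comb f F \<beta> x) \<le> C * (\<Sum>n\<in>F. cmod (\<beta> n))"
  using assms
proof (induction F rule: finite_induct)
  case empty
  show ?case by (auto simp: fin_comb_def)
next
  case (insert k F)
  then obtain C where C: "C \<ge> 0" "\<And>\<beta>. \<beta> \<in> ess_bounded_coeffs M f F \<Longrightarrow>
      AE x in M. cmod (fin_comb f F \<beta> x) \<le> C * (\<Sum>n\<in>F. cmod (\<beta> n))"
    by blast
  show ?case
  proof (cases "\<exists>\<gamma>. ess_bounded M (\<lambda>x. f k x + fin_comb f F \<gamma> x)")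
    case True
    then obtain \<gamma> D where \<gamma>: "ess_bounded M (\<lambda>x. f k x + fin_comb f F \<gamma> x)"
      and D: "AE x in M. cmod (f k x + fin_comb f F \<gamma> x) \<le> D"
      unfolding ess_bounded_def by blast
    show ?thesis
      using insert.hyps C fin_comb_bound_insert_pivot[OF insert.hyps D C(1)]
      by (intro exI[of _ "max D 0 + C + C * (\<Sum>n\<in>F. cmod (\<gamma> n))"])
         (auto simp: ess_bounded_coeffs_insert_pivot[OF insert.hyps \<gamma>] sum_nonneg)
  next
    case False
    then show ?thesis
      using insert.hyps C by (auto simp: ess_bounded_coeffs_insert_no_pivot fin_comb_insert)
  qed
qed

lemma borel_measurable_fin_comb [measurable]:
  "(\<And>n. f n \<in> borel_measurable M) \<Longrightarrow> fin_comb f F \<beta> \<in> borel_measurable M"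
  unfolding fin_comb_def by measurable

lemma ess_sup_norm_fin_comb_le:
  assumes "finite F" and f: "\<And>n. f n \<in> borel_measurable M"
  shows "\<exists>C\<ge>0. \<forall>\<beta>. ess_sup_norm M (fin_comb f F \<beta>) \<le> C * (\<Sum>n\<in>F. cmod (\<beta> n))"
proof -
  obtain C where "C \<ge> 0" and C: "\<And>\<beta>. \<beta> \<in> ess_bounded_coeffs M f F \<Longrightarrow>
      AE x in M. cmod (fin_comb f F \<beta> x) \<le> C * (\<Sum>n\<in>F. cmod (\<beta> n))"
    using fin_comb_bound[OF assms(1)] by blast
  then show ?thesis
    by (intro exI[of _ C] conjI allI ess_sup_norm_le borel_measurable_fin_comb f)
       (auto simp: ess_bounded_coeffs_def sum_nonneg)
qed

lemma ess_sup_norm_fin_comb_lipschitz: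
  assumes f: "\<And>n. f n \<in> borel_measurable M"
    and bound: "\<And>\<beta>. ess_sup_norm M (fin_comb f F \<beta>) \<le> C * (\<Sum>n\<in>F. cmod (\<beta> n))"
    and ab: "a \<in> ess_bounded_coeffs M f F" "b \<in> ess_bounded_coeffs M f F"
  shows "ess_sup_norm M (fin_comb f F a) \<le>
    ess_sup_norm M (fin_comb f F b) + C * (\<Sum>n\<in>F. cmod (a n - b n))"
proof -
  have diff: "fin_comb f F (\<lambda>n. a n - b n) = (\<lambda>x. fin_comb f F a x + (-1) * fin_comb f F b x)"
    by (simp add: fin_comb_def fun_eq_iff algebra_simps sum_subtractf)
  have "ess_bounded M (fin_comb f F (\<lambda>n. a n - b n))"
    using ab unfolding diff ess_bounded_coeffs_def by (intro ess_bounded_add ess_bounded_cmult) auto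
  then have "ess_sup_norm M (\<lambda>x. fin_comb f F b x + fin_comb f F (\<lambda>n. a n - b n) x) \<le>
      ess_sup_norm M (fin_comb f F b) + ess_sup_norm M (fin_comb f F (\<lambda>n. a n - b n))"
    by (intro ess_sup_norm_add_le borel_measurable_fin_comb f)
  moreover have "(\<lambda>x. fin_comb f F b x + fin_comb f F (\<lambda>n. a n - b n) x) = fin_comb f F a"
    by (simp add: diff)
  ultimately show ?thesis using bound[of "\<lambda>n. a n - b n"] by simp
qed

lemma continuous_on_ess_sup_norm_fin_comb:
  assumes "finite F" and f: "\<And>n. f n \<in> borel_measurable M"
  shows "continuous_on (ess_bounded_coeffs M f F) (\<lambda>\<beta>. ess_sup_norm M (fin_comb f F \<beta>))"
  unfolding continuous_on_def
proof (intro ballI)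
  let ?V = "ess_bounded_coeffs M f F" and ?P = "\<lambda>\<beta>. ess_sup_norm M (fin_comb f F \<beta>)"
  obtain C where bound: "\<And>\<beta>. ?P \<beta> \<le> C * (\<Sum>n\<in>F. cmod (\<beta> n))"
    using ess_sup_norm_fin_comb_le[of F f M] assms by blast
  fix b assume b: "b \<in> ?V"
  define d where "d = (\<lambda>a. C * (\<Sum>n\<in>F. cmod (a n - b n)))"
  have "continuous_on ?V d" unfolding d_def
    by (intro continuous_intros continuous_on_subset[OF continuous_on_product_coordinates]) auto
  then have "(d \<longlongrightarrow> d b) (at b within ?V)"
    using b by (simp add: continuous_on_def)
  then have d0: "(d \<longlongrightarrow> 0) (at b within ?V)"
    by (simp add: d_def)
  have "eventually (\<lambda>a. norm (?P a - ?P b) \<le> d a) (at b within ?V)"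
    unfolding eventually_at_filter
  proof (intro always_eventually allI impI)
    fix a assume "a \<in> ?V"
    moreover have "(\<Sum>n\<in>F. cmod (b n - a n)) = (\<Sum>n\<in>F. cmod (a n - b n))"
      by (simp add: norm_minus_commute)
    ultimately show "norm (?P a - ?P b) \<le> d a"
      using ess_sup_norm_fin_comb_lipschitz[OF f bound] b by (fastforce simp: d_def abs_le_iff)
  qed
  from Lim_null_comparison[OF this d0] show "(?P \<longlongrightarrow> ?P b) (at b within ?V)"
    by (simp add: LIM_zero_iff)
qed

lemma borel_measurable_ess_sup_norm_fin_comb:
  assumes "finite F" and f: "\<And>n. f n \<in> borel_measurable M"
  shows "(\<lambda>\<beta>. ess_sup_norm M (fin_comb f F \<beta>)) \<in> borel_measurable borel"
proof -
  let ?V = "ess_bounded_coeffs M f F" and ?P = "\<lambda>\<beta>. ess_sup_norm M (fin_comb f F \<beta>)"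
  have "(\<lambda>\<beta>. indicator ?V \<beta> *\<^sub>R ?P \<beta>) \<in> borel_measurable borel"
    using closed_ess_bounded_coeffs[OF assms(1), of M f] continuous_on_ess_sup_norm_fin_comb[OF assms(1) f]
    by (intro borel_measurable_continuous_on_indicator borel_closed)
  moreover have "(\<lambda>\<beta>. indicator ?V \<beta> *\<^sub>R ?P \<beta>) = ?P"
    by (auto simp: fun_eq_iff indicator_def ess_bounded_coeffs_def ess_sup_norm_eq_0_if_unbounded)
  ultimately show ?thesis by metis
qed

lemma integrable_mult_cnj_L2:
  assumes f: "L2_fun f" and g: "L2_fun g"
  shows "integrable lborel (\<lambda>x. f x * cnj (g x))"
proof (rule Bochner_Integration.integrable_bound)
  show "integrable lborel (\<lambda>x. (cmod (f x))\<^sup>2 + (cmod (g x))\<^sup>2)"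
    using f g by (intro Bochner_Integration.integrable_add) (simp_all add: L2_fun_def)
  have [measurable]: "f \<in> borel_measurable lborel" "g \<in> borel_measurable lborel"
    using f g by (simp_all add: L2_fun_def)
  have [measurable]: "(\<lambda>x. cnj (g x)) \<in> borel_measurable lborel"
    by (intro borel_measurable_continuous_on[where f=cnj] continuous_on_cnj continuous_on_id) measurable
  show "(\<lambda>x. f x * cnj (g x)) \<in> borel_measurable lborel"
    by measurable
  have "cmod (f x) * cmod (g x) \<le> (cmod (f x))\<^sup>2 + (cmod (g x))\<^sup>2" for x
  proof -
    have "2 * (cmod (f x) * cmod (g x)) \<le> (cmod (f x))\<^sup>2 + (cmod (g x))\<^sup>2"
      using sum_squares_bound[of "cmod (f x)" "cmod (g x)"] by simp
    moreover have "0 \<le> cmod (f x) * cmod (g x)" by simp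
    ultimately show ?thesis by linarith
  qed
  then show "AE x in lborel. norm (f x * cnj (g x)) \<le> norm ((cmod (f x))\<^sup>2 + (cmod (g x))\<^sup>2)"
    by (simp add: norm_mult)
qed

lemma L2_norm_fin_comb:
  assumes L2: "\<And>n. L2_fun (h n)" and ortho: "\<And>n m. L2_inner (h n) (h m) = (if n = m then 1 else 0)"
    and F: "finite F"
  shows "L2_norm (fin_comb h F a) = sqrt (\<Sum>n\<in>F. (cmod (a n))\<^sup>2)"
proof -
  have int: "integrable lborel (\<lambda>x. a n * cnj (a m) * (h n x * cnj (h m x)))" for n m
    by (intro Bochner_Integration.integrable_mult_right integrable_mult_cnj_L2 L2)
  have "complex_of_real ((cmod (fin_comb h F a x))\<^sup>2) =
      (\<Sum>n\<in>F. \<Sum>m\<in>F. a n * cnj (a m) * (h n x * cnj (h m x)))" for x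
    unfolding complex_norm_square fin_comb_def cnj_sum sum_product
    by (intro sum.cong refl) (simp add: algebra_simps)
  then have "complex_of_real (LINT x|lborel. (cmod (fin_comb h F a x))\<^sup>2) =
      (LINT x|lborel. (\<Sum>n\<in>F. \<Sum>m\<in>F. a n * cnj (a m) * (h n x * cnj (h m x))))"
    by (simp only: integral_complex_of_real[symmetric])
  also have "\<dots> = (\<Sum>n\<in>F. \<Sum>m\<in>F. a n * cnj (a m) * L2_inner (h n) (h m))"
    using int by (simp add: L2_inner_def Bochner_Integration.integrable_sum)
  also have "\<dots> = (\<Sum>n\<in>F. a n * cnj (a n))"
    using F by (simp add: ortho if_distrib cong: if_cong)
  also have "\<dots> = complex_of_real (\<Sum>n\<in>F. (cmod (a n))\<^sup>2)"
    by (simp only: of_real_sum complex_norm_square)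
  finally show ?thesis
    unfolding L2_norm_def by (simp only: of_real_eq_iff)
qed

lemma fin_comb_infinite: "infinite F \<Longrightarrow> fin_comb f F \<beta> = (\<lambda>x. 0)"
  by (simp add: fin_comb_def fun_eq_iff)

lemma Hpow_comb_eq_fin_comb:
  "Hpow_comb h lam s F a =
    fin_comb (\<lambda>n x. complex_of_real (((lam n)\<^sup>2) powr (s / 2)) * h n x) F a"
  by (simp add: Hpow_comb_def fin_comb_def fun_eq_iff mult.assoc mult.left_commute)

lemma Hbar_norm_eq:
  assumes L2: "\<And>n. L2_fun (h n)" and ortho: "\<And>n m. L2_inner (h n) (h m) = (if n = m then 1 else 0)"
  shows "Hbar_norm h lam s F a = sqrt (\<Sum>n\<in>F. (((lam n)\<^sup>2) powr (s / 2) * cmod (a n))\<^sup>2)"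
proof (cases "finite F")
  case True
  then show ?thesis
    by (simp add: Hbar_norm_def Hpow_comb_def L2_norm_fin_comb[OF L2 ortho] norm_mult)
qed (simp add: Hbar_norm_def Hpow_comb_def fin_comb_def L2_norm_def)

lemma Hbar_norm_le_scaled:
  assumes L2: "\<And>n. L2_fun (h n)" and ortho: "\<And>n m. L2_inner (h n) (h m) = (if n = m then 1 else 0)"
    and "0 \<le> \<rho>" and ab: "\<And>n. n \<in> F \<Longrightarrow> cmod (a n) \<le> \<rho> * cmod (b n)"
  shows "Hbar_norm h lam s F a \<le> \<rho> * Hbar_norm h lam s F b"
proof -
  let ?w = "\<lambda>n. ((lam n)\<^sup>2) powr (s / 2)"
  have "(\<Sum>n\<in>F. (?w n * cmod (a n))\<^sup>2) \<le> (\<Sum>n\<in>F. \<rho>\<^sup>2 * (?w n * cmod (b n))\<^sup>2)"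
  proof (rule sum_mono)
    fix n assume "n \<in> F"
    then have "?w n * cmod (a n) \<le> \<rho> * (?w n * cmod (b n))"
      using ab mult_left_mono[of "cmod (a n)" "\<rho> * cmod (b n)" "?w n"] by (simp add: mult.left_commute)
    then have "(?w n * cmod (a n))\<^sup>2 \<le> (\<rho> * (?w n * cmod (b n)))\<^sup>2"
      by (intro power_mono) simp_all
    then show "(?w n * cmod (a n))\<^sup>2 \<le> \<rho>\<^sup>2 * (?w n * cmod (b n))\<^sup>2"
      by (simp add: power_mult_distrib)
  qed
  from real_sqrt_le_mono[OF this] show ?thesis
    using \<open>0 \<le> \<rho>\<close> by (simp add: Hbar_norm_eq[OF L2 ortho] sum_distrib_left[symmetric] real_sqrt_mult)
qed

lemma Wbar_inf_norm_eq_ess_sup_norm: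
  "Wbar_inf_norm h lam s F a =
    ess_sup_norm lborel (fin_comb (\<lambda>n x. complex_of_real (((lam n)\<^sup>2) powr (s / 2)) * h n x) F a)"
  by (simp add: Wbar_inf_norm_def Linf_norm_eq_ess_sup_norm Hpow_comb_eq_fin_comb)

lemma Wbar_inf_norm_nonneg: "0 \<le> Wbar_inf_norm h lam s F a"
  by (simp add: Wbar_inf_norm_eq_ess_sup_norm ess_sup_norm_nonneg)

lemma Wbar_inf_norm_infinite: "infinite F \<Longrightarrow> Wbar_inf_norm h lam s F a = 0"
  unfolding Wbar_inf_norm_eq_ess_sup_norm fin_comb_infinite
  by (intro antisym ess_sup_norm_le ess_sup_norm_nonneg) auto

lemma
  assumes "finite F" and h: "\<And>n. h n \<in> borel_measurable lborel"
  shows Wbar_inf_norm_schr_coeff_le: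
      "\<exists>C\<ge>0. \<forall>\<tau> a. Wbar_inf_norm h lam s F (schr_coeff lam \<tau> a) \<le> C * (\<Sum>n\<in>F. cmod (a n))"
    and borel_measurable_Wbar_inf_norm: "Wbar_inf_norm h lam s F \<in> borel_measurable borel"
proof -
  let ?f = "\<lambda>n x. complex_of_real (((lam n)\<^sup>2) powr (s / 2)) * h n x"
  have f: "?f n \<in> borel_measurable lborel" for n
    using h by measurable
  have norm_schr: "cmod (schr_coeff lam \<tau> a n) = cmod (a n)" for \<tau> a n
    using norm_exp_i_times[of "- (\<tau> * (lam n)\<^sup>2)"] by (simp add: schr_coeff_def norm_mult)
  obtain C where "C \<ge> 0"
    and C: "\<And>\<beta>. ess_sup_norm lborel (fin_comb ?f F \<beta>) \<le> C * (\<Sum>n\<in>F. cmod (\<beta> n))"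
    using ess_sup_norm_fin_comb_le[OF assms(1), of ?f lborel] f by blast
  show "\<exists>C\<ge>0. \<forall>\<tau> a. Wbar_inf_norm h lam s F (schr_coeff lam \<tau> a) \<le> C * (\<Sum>n\<in>F. cmod (a n))"
  proof (intro exI[of _ C] conjI allI \<open>C \<ge> 0\<close>)
    fix \<tau> a
    show "Wbar_inf_norm h lam s F (schr_coeff lam \<tau> a) \<le> C * (\<Sum>n\<in>F. cmod (a n))"
      using C[of "schr_coeff lam \<tau> a"] by (simp only: Wbar_inf_norm_eq_ess_sup_norm norm_schr)
  qed
  have "Wbar_inf_norm h lam s F = (\<lambda>\<beta>. ess_sup_norm lborel (fin_comb ?f F \<beta>))"
    by (simp add: fun_eq_iff Wbar_inf_norm_eq_ess_sup_norm)
  then show "Wbar_inf_norm h lam s F \<in> borel_measurable borel"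
    using borel_measurable_ess_sup_norm_fin_comb[OF assms(1) f] by simp
qed

lemma set_integral_power_root_le:
  fixes W :: "real \<Rightarrow> real" and q :: nat
  assumes "a \<le> b" and "0 < q"
    and W: "\<And>\<tau>. \<tau> \<in> {a..b} \<Longrightarrow> 0 \<le> W \<tau>" "\<And>\<tau>. \<tau> \<in> {a..b} \<Longrightarrow> W \<tau> \<le> B"
  shows "(LINT \<tau>:{a..b}|lborel. W \<tau> ^ q) powr (1 / q) \<le> (b - a) powr (1 / q) * B"
proof -
  define X where "X = (LINT \<tau>:{a..b}|lborel. W \<tau> ^ q)"
  have "0 \<le> B" using W \<open>a \<le> b\<close> by force
  have "0 \<le> X"
    unfolding X_def set_lebesgue_integral_def using W(1)
    by (intro integral_nonneg_AE AE_I2) (simp add: indicator_def)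
  have "X \<le> (b - a) * B ^ q"
  proof (cases "set_integrable lborel {a..b} (\<lambda>\<tau>. W \<tau> ^ q)")
    case True
    have "set_integrable lborel {a..b} (\<lambda>\<tau>. B ^ q)"
      unfolding set_integrable_def
      by (intro Bochner_Integration.integrable_scaleR_left integrable_real_indicator)
         (auto simp: emeasure_lborel_Icc_eq)
    then have "X \<le> (LINT \<tau>:{a..b}|lborel. B ^ q)"
      unfolding X_def using W by (intro set_integral_mono True) (auto intro!: power_mono)
    then show ?thesis using \<open>a \<le> b\<close> by (simp add: set_integral_const)
  next
    case False
    then have "X = 0"
      unfolding X_def set_lebesgue_integral_def set_integrable_def by (rule not_integrable_integral_eq)
    then show ?thesis using \<open>a \<le> b\<close> \<open>0 \<le> B\<close> by simp
  qed
  then have "X powr (1 / q) \<le> ((b - a) * B ^ q) powr (1 / q)"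
    using \<open>0 \<le> X\<close> by (intro powr_mono2) auto
  also have "\<dots> = (b - a) powr (1 / q) * (B ^ q) powr (1 / q)"
    using \<open>a \<le> b\<close> \<open>0 \<le> B\<close> by (simp add: powr_mult)
  also have "(B ^ q) powr (1 / q) = B"
    using \<open>0 \<le> B\<close> \<open>0 < q\<close>
    by (cases "B = 0") (simp_all add: powr_realpow[symmetric] powr_powr)
  finally show ?thesis unfolding X_def .
qed

lemma borel_measurable_set_integral_schr_coeff:
  fixes \<Phi> :: "(nat \<Rightarrow> complex) \<Rightarrow> real"
  assumes [measurable]: "\<Phi> \<in> borel_measurable borel" "\<And>n. g n \<in> borel_measurable M" "A \<in> sets borel"
  shows "(\<lambda>\<omega>. LINT \<tau>:A|lborel. \<Phi> (schr_coeff lam \<tau> (\<lambda>n. c n * g n \<omega>)) ^ q) \<in> borel_measurable M"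
proof -
  have [measurable]: "(\<lambda>x. schr_coeff lam (snd x) (\<lambda>n. c n * g n (fst x))) \<in> borel_measurable (M \<Otimes>\<^sub>M lborel)"
    unfolding schr_coeff_def by (intro measurable_coordinatewise_then_product) measurable
  then have "(\<lambda>(\<omega>, \<tau>). indicator A \<tau> *\<^sub>R \<Phi> (schr_coeff lam \<tau> (\<lambda>n. c n * g n \<omega>)) ^ q)
      \<in> borel_measurable (M \<Otimes>\<^sub>M lborel)"
    unfolding case_prod_beta' by measurable
  from lborel.borel_measurable_lebesgue_integral[OF this] show ?thesis
    by (simp add: set_lebesgue_integral_def)
qed

lemma set_integral_Wbar_inf_norm_schr_coeff_le:
  assumes C: "0 \<le> C" "\<And>\<tau> a. Wbar_inf_norm h lam s F (schr_coeff lam \<tau> a) \<le> C * (\<Sum>n\<in>F. cmod (a n))"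
    and "a0 \<le> b0" and "0 < q" and "0 \<le> \<rho>" and a: "\<And>n. n \<in> F \<Longrightarrow> cmod (a n) \<le> \<rho> * cmod (c n)"
  shows "(LINT \<tau>:{a0..b0}|lborel. Wbar_inf_norm h lam s F (schr_coeff lam \<tau> a) ^ q) powr (1 / q)
    \<le> \<rho> * ((b0 - a0) powr (1 / q) * C * (\<Sum>n\<in>F. cmod (c n)))"
proof -
  have "C * (\<Sum>n\<in>F. cmod (a n)) \<le> C * (\<rho> * (\<Sum>n\<in>F. cmod (c n)))"
    using a C(1) by (intro mult_left_mono) (auto simp: sum_distrib_left intro: sum_mono)
  then have "Wbar_inf_norm h lam s F (schr_coeff lam \<tau> a) \<le> C * (\<rho> * (\<Sum>n\<in>F. cmod (c n)))" for \<tau>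
    using C(2) order_trans by blast
  then have "(LINT \<tau>:{a0..b0}|lborel. Wbar_inf_norm h lam s F (schr_coeff lam \<tau> a) ^ q) powr (1 / q)
      \<le> (b0 - a0) powr (1 / q) * (C * (\<rho> * (\<Sum>n\<in>F. cmod (c n))))"
    using \<open>a0 \<le> b0\<close> \<open>0 < q\<close> by (intro set_integral_power_root_le Wbar_inf_norm_nonneg)
  then show ?thesis by (simp add: algebra_simps)
qed

lemma sets_Hbar_norm_Wbar_inf_norm_le:
  fixes g :: "nat \<Rightarrow> 'a \<Rightarrow> real" and c :: "nat \<Rightarrow> complex"
  assumes L2: "\<And>n. L2_fun (h n)" and ortho: "\<And>n m. L2_inner (h n) (h m) = (if n = m then 1 else 0)"
    and h: "\<And>n. h n \<in> borel_measurable lborel" and "finite F"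
    and [measurable]: "\<And>n. g n \<in> borel_measurable M"
  shows "{\<omega> \<in> space M. Hbar_norm h lam s F (\<lambda>n. c n * g n \<omega>) \<le> t \<and>
    (LINT \<tau>:{a0..b0}|lborel. Wbar_inf_norm h lam s' F (schr_coeff lam \<tau> (\<lambda>n. c n * g n \<omega>)) ^ q)
      powr (1 / q) \<le> t} \<in> sets M"
proof -
  have [measurable]: "(\<lambda>\<omega>. LINT \<tau>:{a0..b0}|lborel.
      Wbar_inf_norm h lam s' F (schr_coeff lam \<tau> (\<lambda>n. c n * g n \<omega>)) ^ q) \<in> borel_measurable M"
    by (intro borel_measurable_set_integral_schr_coeff borel_measurable_Wbar_inf_norm \<open>finite F\<close> h) auto
  show ?thesis
    unfolding Hbar_norm_eq[OF L2 ortho] by measurable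
qed

lemma (in prob_space) prob_all_abs_less_pos:
  fixes g :: "nat \<Rightarrow> 'a \<Rightarrow> real"
  assumes indep: "indep_vars (\<lambda>_. borel) g UNIV"
    and small: "\<And>n. prob {\<omega> \<in> space M. \<bar>g n \<omega>\<bar> < \<rho>} > 0" and "finite F"
  shows "prob {\<omega> \<in> space M. \<forall>n\<in>F. \<bar>g n \<omega>\<bar> < \<rho>} > 0"
proof (cases "F = {}")
  case False
  let ?E = "\<lambda>n. g n -` {x. \<bar>x\<bar> < \<rho>} \<inter> space M"
  have "indep_sets (\<lambda>i. {g i -` X \<inter> space M | X. X \<in> sets borel}) UNIV"
    using indep unfolding indep_vars_def2 by blast
  moreover have "{x::real. \<bar>x\<bar> < \<rho>} \<in> sets borel" by measurable
  ultimately have "prob (\<Inter>n\<in>F. ?E n) = (\<Prod>n\<in>F. prob (?E n))"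
    using False \<open>finite F\<close> by (intro indep_setsD) (auto intro!: exI[of _ "{x. \<bar>x\<bar> < \<rho>}"])
  moreover have "(\<Inter>n\<in>F. ?E n) = {\<omega> \<in> space M. \<forall>n\<in>F. \<bar>g n \<omega>\<bar> < \<rho>}"
    using False by auto
  moreover have "?E n = {\<omega> \<in> space M. \<bar>g n \<omega>\<bar> < \<rho>}" for n
    by auto
  ultimately show ?thesis
    using small by (simp add: prod_pos)
qed (simp add: prob_space)

lemma exists_pos_mult_le:
  fixes a b t :: real
  assumes "0 \<le> a" "0 \<le> b" "0 < t"
  shows "\<exists>\<rho>>0. \<rho> * a \<le> t \<and> \<rho> * b \<le> t"
proof (intro exI conjI)
  let ?\<rho> = "t / (a + b + 1)"
  show "0 < ?\<rho>" using assms by simp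
  show "?\<rho> * a \<le> t" "?\<rho> * b \<le> t"
    using assms by (simp_all add: field_simps)
qed

lemma exists_scale_small_norms:
  assumes L2: "\<And>n. L2_fun (h n)" and ortho: "\<And>n m. L2_inner (h n) (h m) = (if n = m then 1 else 0)"
    and h: "\<And>n. h n \<in> borel_measurable lborel"
    and "finite F" "a0 \<le> b0" "0 < q" "0 < t"
  shows "\<exists>\<rho>>0. \<forall>a. (\<forall>n\<in>F. cmod (a n) \<le> \<rho> * cmod (c n)) \<longrightarrow>
    Hbar_norm h lam s F a \<le> t \<and>
    (LINT \<tau>:{a0..b0}|lborel. Wbar_inf_norm h lam s' F (schr_coeff lam \<tau> a) ^ q) powr (1 / q) \<le> t"
proof -
  obtain C where C: "0 \<le> C"
    "\<And>\<tau> a. Wbar_inf_norm h lam s' F (schr_coeff lam \<tau> a) \<le> C * (\<Sum>n\<in>F. cmod (a n))"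
    using Wbar_inf_norm_schr_coeff_le[OF \<open>finite F\<close>, where h = h] h by blast
  define K where "K = (b0 - a0) powr (1 / q) * C * (\<Sum>n\<in>F. cmod (c n))"
  obtain \<rho> where "\<rho> > 0" and \<rho>: "\<rho> * Hbar_norm h lam s F c \<le> t" "\<rho> * K \<le> t"
    using exists_pos_mult_le[of "Hbar_norm h lam s F c" K t] \<open>0 < t\<close> C(1)
    by (auto simp: K_def Hbar_norm_eq[OF L2 ortho] sum_nonneg)
  show ?thesis
  proof (intro exI[of _ \<rho>] conjI allI impI \<open>\<rho> > 0\<close>)
    fix a assume small: "\<forall>n\<in>F. cmod (a n) \<le> \<rho> * cmod (c n)"
    have "Hbar_norm h lam s F a \<le> \<rho> * Hbar_norm h lam s F c"
      using \<open>\<rho> > 0\<close> small by (intro Hbar_norm_le_scaled[OF L2 ortho]) auto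
    then show "Hbar_norm h lam s F a \<le> t" using \<rho>(1) by linarith
    have "(LINT \<tau>:{a0..b0}|lborel. Wbar_inf_norm h lam s' F (schr_coeff lam \<tau> a) ^ q) powr (1 / q) \<le> \<rho> * K"
      unfolding K_def using \<open>\<rho> > 0\<close> \<open>a0 \<le> b0\<close> \<open>0 < q\<close> small
      by (intro set_integral_Wbar_inf_norm_schr_coeff_le[OF C]) auto
    then show "(LINT \<tau>:{a0..b0}|lborel. Wbar_inf_norm h lam s' F (schr_coeff lam \<tau> a) ^ q) powr (1 / q) \<le> t"
      using \<rho>(2) by linarith
  qed
qed

text \<open>Oddness of p is only used for p > 0.\<close>

theorem mainTheorem18:
  fixes M :: "'w measure" and g :: "nat \<Rightarrow> 'w \<Rightarrow> real"
    and h :: "nat \<Rightarrow> real^'n \<Rightarrow> complex" and lam :: "nat \<Rightarrow> real"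
    and c :: "nat \<Rightarrow> complex" and p :: nat and t :: real and N :: nat
  assumes basis: "hermite_basis h lam"
    and P: "prob_space M"
    and g_rv: "\<forall>n. g n \<in> borel_measurable M"
    and g_indep: "prob_space.indep_vars M (\<lambda>_. borel) g UNIV"
    and g_small: "\<forall>n \<rho>. \<rho> > 0 \<longrightarrow> measure M {\<omega> \<in> space M. \<bar>g n \<omega>\<bar> < \<rho>} > 0"
    and p_odd: "odd p"
    and u0: "in_Hbar lam ((real CARD('n) - 1) / 2) c"
    and t_pos: "t > 0"
    and N_pos: "N \<ge> 1"
  shows "measure M {\<omega> \<in> space M.
           Hbar_norm h lam ((real CARD('n) - 1) / 2) {n. lam n < real N} (\<lambda>n. c n * g n \<omega>) \<le> t \<and>
           (LINT \<tau>:{-2*pi..2*pi}|lborel.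
               (Wbar_inf_norm h lam (1/7) {n. lam n < real N}
                  (schr_coeff lam \<tau> (\<lambda>n. c n * g n \<omega>))) ^ (2*p)) powr (1 / real (2*p)) \<le> t} > 0"
proof -
  interpret prob_space M by (rule P)
  define s where "s = (real CARD('n) - 1) / 2"
  define F where "F = {n. lam n < real N}"
  let ?X = "\<lambda>\<omega>. Hbar_norm h lam s F (\<lambda>n. c n * g n \<omega>)"
  let ?Y = "\<lambda>\<omega>. (LINT \<tau>:{-2*pi..2*pi}|lborel. (Wbar_inf_norm h lam (1/7) F
    (schr_coeff lam \<tau> (\<lambda>n. c n * g n \<omega>))) ^ (2*p)) powr (1 / real (2*p))"
  have L2: "L2_fun (h n)" and ortho: "L2_inner (h n) (h m) = (if n = m then 1 else 0)"
    and h: "h n \<in> borel_measurable lborel" for n m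
    using basis by (simp_all add: hermite_basis_def L2_fun_def)
  have "0 < 2 * p" using p_odd by (cases p) auto
  have "prob {\<omega> \<in> space M. ?X \<omega> \<le> t \<and> ?Y \<omega> \<le> t} > 0"
  proof (cases "finite F")
    case False
    then have "{\<omega> \<in> space M. ?X \<omega> \<le> t \<and> ?Y \<omega> \<le> t} = space M"
      using t_pos \<open>0 < 2 * p\<close>
      by (simp add: Hbar_norm_eq[OF L2 ortho] Wbar_inf_norm_infinite power_0_left)
    then show ?thesis by (simp add: prob_space)
  next
    case True
    have "-2*pi \<le> 2*pi" by simp
    from exists_scale_small_norms[OF L2 ortho h True this \<open>0 < 2 * p\<close> t_pos]
    obtain \<rho> where "\<rho> > 0" and \<rho>: "\<forall>a. (\<forall>n\<in>F. cmod (a n) \<le> \<rho> * cmod (c n)) \<longrightarrow>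
        Hbar_norm h lam s F a \<le> t \<and> (LINT \<tau>:{-2*pi..2*pi}|lborel.
          Wbar_inf_norm h lam (1/7) F (schr_coeff lam \<tau> a) ^ (2*p)) powr (1 / real (2*p)) \<le> t"
      by blast
    have "{\<omega> \<in> space M. \<forall>n\<in>F. \<bar>g n \<omega>\<bar> < \<rho>} \<subseteq> {\<omega> \<in> space M. ?X \<omega> \<le> t \<and> ?Y \<omega> \<le> t}"
    proof safe
      fix \<omega> assume "\<forall>n\<in>F. \<bar>g n \<omega>\<bar> < \<rho>"
      then have "\<forall>n\<in>F. cmod (c n * g n \<omega>) \<le> \<rho> * cmod (c n)"
        by (metis less_imp_le mult.commute mult_right_mono norm_ge_zero norm_mult norm_of_real)
      from mp[OF spec[OF \<rho>, of "\<lambda>n. c n * g n \<omega>"] this] show "?X \<omega> \<le> t" "?Y \<omega> \<le> t"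
        by simp_all
    qed
    moreover have "{\<omega> \<in> space M. ?X \<omega> \<le> t \<and> ?Y \<omega> \<le> t} \<in> events"
      by (rule sets_Hbar_norm_Wbar_inf_norm_le) (use L2 ortho h True g_rv in auto)
    ultimately show ?thesis
      using prob_all_abs_less_pos[OF g_indep _ True, of \<rho>] g_small \<open>\<rho> > 0\<close>
      by (meson finite_measure_mono order_less_le_trans)
  qed
  then show ?thesis by (simp add: s_def F_def)
qed

end
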